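(* Let $\mathcal{L}:\mathcal{M}_2\to\mathcal{M}_2$ be a linear map with $\operatorname{Tr}\mathcal{L}(X)=0$ for all $X\in\mathcal{M}_2$, and suppose that for every $t\ge 0$ the map $e^{t\mathcal{L}^\ddagger}$ is a unital Schwarz map. Let $\ell_1,\ell_2,\ell_3$ be the eigenvalues, counted with algebraic multiplicity, of the restriction of $\mathcal{L}$ to the (invariant) subspace $\mathcal{T}=\{X\in\mathcal{M}_2:\operatorname{Tr}X=0\}$, and set $\Gamma_k=-\operatorname{Re}\ell_k$ and $\Gamma=\Gamma_1+\Gamma_2+\Gamma_3$. Then $$\Gamma_k\le \tfrac{2}{3}\,\Gamma\qquad (k=1,2,3).$$
   Context: $\mathcal{M}_n$ denotes the complex $n\times n$ matrices. For a linear map $\Lambda$ on $\mathcal{M}_n$, its dual $\Lambda^\ddagger$ is defined by $\operatorname{Tr}\big((\Lambda^\ddagger(X))^\dagger Y\big)=\operatorname{Tr}\big(X^\dagger\Lambda(Y)\big)$ for all $X,Y$. A linear map $\Phi$ on $\mathcal{M}_n$ is unital if $\Phi(\mathbb{1})=\mathbb{1}$; a unital Schwarz map is a unital linear map satisfying $\Phi(X^\dagger X)\ge\Phi(X)^\dagger\Phi(X)$ (in the positive semidefinite order) for all $X\in\mathcal{M}_n$. The numbers $\Gamma_k$ are called relaxation rates. *)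

theory Defs
  imports "HOL-Analysis.Analysis" "HOL-Computational_Algebra.Polynomial"
begin

type_synonym cmat2 = "complex^2^2"

definition mtrace :: "complex^'n^'n \<Rightarrow> complex" where
  "mtrace A = (\<Sum>i\<in>UNIV. A$i$i)"

definition cadj :: "complex^'n^'n \<Rightarrow> complex^'n^'n" where
  "cadj A = (\<chi> i j. cnj (A$j$i))"

definition cscale :: "complex \<Rightarrow> complex^'n^'m \<Rightarrow> complex^'n^'m" where
  "cscale a A = (\<chi> i j. a * A$i$j)"

definition clinear_map :: "(cmat2 \<Rightarrow> cmat2) \<Rightarrow> bool" where
  "clinear_map L \<longleftrightarrow> (\<forall>X Y. L (X + Y) = L X + L Y) \<and> (\<forall>a X. L (cscale a X) = cscale a (L X))"

definition hs_dual :: "(cmat2 \<Rightarrow> cmat2) \<Rightarrow> (cmat2 \<Rightarrow> cmat2)" where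
  "hs_dual L = (THE M. \<forall>X Y. mtrace (cadj (M X) ** Y) = mtrace (cadj X ** L Y))"

definition psd :: "complex^'n^'n \<Rightarrow> bool" where
  "psd A \<longleftrightarrow> (\<forall>v::complex^'n. Im (\<Sum>i\<in>UNIV. cnj (v$i) * (A *v v)$i) = 0
                              \<and> Re (\<Sum>i\<in>UNIV. cnj (v$i) * (A *v v)$i) \<ge> 0)"

definition unital_schwarz :: "(cmat2 \<Rightarrow> cmat2) \<Rightarrow> bool" where
  "unital_schwarz \<Phi> \<longleftrightarrow> clinear_map \<Phi> \<and> \<Phi> (mat 1) = mat 1 \<and>
     (\<forall>X. psd (\<Phi> (cadj X ** X) - cadj (\<Phi> X) ** \<Phi> X))"

definition map_exp :: "real \<Rightarrow> (cmat2 \<Rightarrow> cmat2) \<Rightarrow> cmat2 \<Rightarrow> cmat2" where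
  "map_exp t L X = (\<Sum>n. (t ^ n / fact n) *\<^sub>R (L ^^ n) X)"

definition pauli :: "3 \<Rightarrow> cmat2" where
  "pauli k = (if k = 1 then (\<chi> i j. if i \<noteq> j then 1 else 0)
              else if k = 2 then (\<chi> i j. if i = 1 \<and> j = 2 then - \<i> else if i = 2 \<and> j = 1 then \<i> else 0)
              else (\<chi> i j. if i = j then (if i = 1 then 1 else -1) else 0))"

text \<open>Matrix of the restriction of L to T in the Pauli basis
  (coordinate of a traceless X along pauli i is Tr(pauli i * X)/2).\<close>
definition restr_T_matrix :: "(cmat2 \<Rightarrow> cmat2) \<Rightarrow> complex^3^3" where
  "restr_T_matrix L = (\<chi> i j. mtrace (pauli i ** L (pauli j)) / 2)"

definition char_poly3 :: "complex^3^3 \<Rightarrow> complex poly" where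
  "char_poly3 M = det ((\<chi> i j. (if i = j then [:0, 1:] else 0) - [:M$i$j:]) :: complex poly^3^3)"

end

theory Submission
  imports Defs "HOL-Analysis.Cross3"
begin

text \<open>Let \<open>F = L\<^sup>\<ddagger>\<close>. Since \<open>exp (t F)\<close> is a Schwarz map for \<open>t \<ge> 0\<close> and the identity at \<open>t = 0\<close>,
  the right derivative at \<open>t = 0\<close> of its Schwarz defect, the dissipator
  \<open>F(X\<^sup>\<dagger>X) - F(X)\<^sup>\<dagger>X - X\<^sup>\<dagger>F(X)\<close>, is positive semidefinite for every \<open>X\<close>. For \<open>X = 1 + \<sigma>\<^sub>k\<close> this makes
  \<open>F(\<sigma>\<^sub>k) = s\<^sub>k 1 + \<Sum>\<^sub>l m\<^sub>k\<^sub>l \<sigma>\<^sub>l\<close> Hermitian, and the real matrix \<open>m\<close> is the matrix of \<open>L\<close> on the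
  traceless matrices in the Pauli basis. For \<open>X = (u + i v)\<cdot>\<sigma>\<close> the dissipator is \<open>a 1 + b\<cdot>\<sigma>\<close>
  with \<open>a\<close>, \<open>b\<close> explicit in \<open>s\<close>, \<open>m\<close>, \<open>u\<close>, \<open>v\<close>, and positivity means \<open>a |n| + b\<cdot>n \<ge> 0\<close> for all \<open>n\<close>.
  Choosing \<open>u\<close>, \<open>v\<close> orthogonal to \<open>w\<close> with \<open>u \<times> v\<close> parallel to \<open>w\<close> and \<open>n = -w\<close> yields
  \<open>3 w\<cdot>m w \<ge> 2 |w|\<^sup>2 tr m\<close> for every real \<open>w\<close>. Applied to the real and imaginary parts of an
  eigenvector, this gives \<open>Re l\<^sub>k \<ge> 2/3 tr m = 2/3 \<Sum>\<^sub>j Re l\<^sub>j\<close>, that is \<open>\<Gamma>\<^sub>k \<le> 2/3 \<Gamma>\<close>.\<close>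

unbundle cross3_syntax

section \<open>Hilbert--Schmidt duality on 2x2 matrices\<close>

definition hs_inner :: "cmat2 \<Rightarrow> cmat2 \<Rightarrow> complex" where
  "hs_inner A B = (\<Sum>i\<in>UNIV. \<Sum>j\<in>UNIV. cnj (A$i$j) * B$i$j)"

lemma mtrace_cadj_mult: "mtrace (cadj A ** B) = hs_inner A B"
  by (simp add: mtrace_def cadj_def matrix_matrix_mult_def hs_inner_def sum_2 algebra_simps)

definition mat_unit :: "2 \<Rightarrow> 2 \<Rightarrow> cmat2" where
  "mat_unit k l = (\<chi> i j. if i = k \<and> j = l then 1 else 0)"

lemma cnj_hs_inner: "cnj (hs_inner A B) = hs_inner B A"
  by (simp add: hs_inner_def mult.commute)

lemma hs_inner_mat_unit: "hs_inner A (mat_unit k l) = cnj (A$k$l)"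
  using exhaust_2[of k] exhaust_2[of l] by (auto simp: hs_inner_def mat_unit_def sum_2)

lemma clinear_map_mat_unit_expansion:
  assumes "clinear_map L"
  shows "L Y = cscale (Y$1$1) (L (mat_unit 1 1)) + cscale (Y$1$2) (L (mat_unit 1 2))
            + cscale (Y$2$1) (L (mat_unit 2 1)) + cscale (Y$2$2) (L (mat_unit 2 2))"
proof -
  have "Y = cscale (Y$1$1) (mat_unit 1 1) + cscale (Y$1$2) (mat_unit 1 2)
          + cscale (Y$2$1) (mat_unit 2 1) + cscale (Y$2$2) (mat_unit 2 2)"
    by (simp add: vec_eq_iff forall_2 cscale_def mat_unit_def)
  then show ?thesis
    using assms unfolding clinear_map_def by metis
qed

definition dual_map :: "(cmat2 \<Rightarrow> cmat2) \<Rightarrow> cmat2 \<Rightarrow> cmat2" where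
  "dual_map L X = (\<chi> i j. hs_inner (L (mat_unit i j)) X)"

lemma hs_inner_dual_map:
  assumes "clinear_map L"
  shows "hs_inner (dual_map L X) Y = hs_inner X (L Y)"
  by (subst clinear_map_mat_unit_expansion[OF assms])
    (simp add: hs_inner_def dual_map_def cscale_def sum_2 algebra_simps)

lemma hs_dual_eq_dual_map:
  assumes "clinear_map L"
  shows "hs_dual L = dual_map L"
  unfolding hs_dual_def
proof (rule the_equality)
  show "\<forall>X Y. mtrace (cadj (dual_map L X) ** Y) = mtrace (cadj X ** L Y)"
    by (simp add: mtrace_cadj_mult hs_inner_dual_map[OF assms])
next
  fix M assume M: "\<forall>X Y. mtrace (cadj (M X) ** Y) = mtrace (cadj X ** L Y)"
  show "M = dual_map L"
  proof (intro ext iffD2[OF vec_eq_iff] allI)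
    fix X i j
    have "hs_inner (M X) (mat_unit i j) = hs_inner X (L (mat_unit i j))"
      using M by (simp add: mtrace_cadj_mult)
    then have "M X $ i $ j = cnj (hs_inner X (L (mat_unit i j)))"
      by (metis complex_cnj_cnj hs_inner_mat_unit)
    then show "M X $ i $ j = dual_map L X $ i $ j"
      by (simp add: dual_map_def cnj_hs_inner)
  qed
qed

lemma clinear_map_dual_map: "clinear_map (dual_map L)"
  unfolding clinear_map_def by (simp add: dual_map_def hs_inner_def vec_eq_iff cscale_def sum_2 algebra_simps)

lemma dual_map_one_eq_0:
  assumes "\<And>X. mtrace (L X) = 0"
  shows "dual_map L (mat 1) = 0"
proof -
  have "hs_inner A (mat 1) = cnj (mtrace A)" for A
    by (simp add: hs_inner_def mtrace_def mat_def sum_2)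
  then show ?thesis
    using assms by (simp add: dual_map_def vec_eq_iff)
qed

section \<open>Differentiating the exponential series at zero\<close>

lemma scaleR_eq_cscale: "r *\<^sub>R X = cscale (of_real r) X"
  by (simp add: vec_eq_iff cscale_def) (simp add: scaleR_conv_of_real)

lemma clinear_map_imp_linear: "clinear_map F \<Longrightarrow> linear F"
  unfolding clinear_map_def by (intro linearI) (simp_all add: scaleR_eq_cscale)

lemma clinear_map_sum_cscale:
  assumes "clinear_map F"
  shows "F (\<Sum>k\<in>S. cscale (c k) (A k)) = (\<Sum>k\<in>S. cscale (c k) (F (A k)))"
  using assms by (simp add: linear_sum[OF clinear_map_imp_linear[OF assms]] clinear_map_def)

lemma clinear_map_imp_bounded_linear: "clinear_map F \<Longrightarrow> bounded_linear F"
  using clinear_map_imp_linear linear_conv_bounded_linear by blast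

lemma norm_funpow_le:
  fixes F :: "'a::real_normed_vector \<Rightarrow> 'a"
  assumes F: "\<And>Z. norm (F Z) \<le> norm Z * C" and "0 \<le> C"
  shows "norm ((F ^^ n) Z) \<le> C ^ n * norm Z"
proof (induction n)
  case (Suc n)
  have "norm ((F ^^ Suc n) Z) \<le> norm ((F ^^ n) Z) * C" using F by simp
  also have "\<dots> \<le> C ^ n * norm Z * C" using Suc \<open>0 \<le> C\<close> by (rule mult_right_mono)
  finally show ?case by (simp add: algebra_simps)
qed simp

lemma map_exp_second_order_bound:
  assumes "bounded_linear F"
  obtains K where "\<And>t. 0 \<le> t \<Longrightarrow> t \<le> 1 \<Longrightarrow> norm (map_exp t F Y - Y - t *\<^sub>R F Y) \<le> t\<^sup>2 * K"
proof -
  obtain C where C: "\<And>Z. norm (F Z) \<le> norm Z * C" and "C > 0"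
    using bounded_linear.pos_bounded[OF assms] by blast
  define b where "b n = C ^ n / fact n * norm Y" for n
  have b_nonneg: "0 \<le> b n" for n using \<open>C > 0\<close> by (simp add: b_def)
  have "summable b"
    using summable_mult2[OF summable_exp[of C], of "norm Y"] unfolding b_def by (simp add: field_simps)
  then have b_tail: "summable (\<lambda>n. b (n + 2))" by (rule summable_ignore_initial_segment)
  have "norm (map_exp t F Y - Y - t *\<^sub>R F Y) \<le> t\<^sup>2 * (\<Sum>n. b (n + 2))" if t: "0 \<le> t" "t \<le> 1" for t
  proof -
    define a where "a n = (t ^ n / fact n) *\<^sub>R (F ^^ n) Y" for n
    have a_le: "norm (a n) \<le> t ^ n * b n" for n
    proof -
      have "norm (a n) = t ^ n / fact n * norm ((F ^^ n) Y)" using t by (simp add: a_def)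
      also have "\<dots> \<le> t ^ n / fact n * (C ^ n * norm Y)"
        using norm_funpow_le[OF C, of n Y] \<open>C > 0\<close> t by (intro mult_left_mono) auto
      finally show ?thesis by (simp add: b_def)
    qed
    have t_pow: "t ^ n \<le> 1" for n using t by (simp add: power_le_one)
    have "norm (a n) \<le> b n" for n
      using order_trans[OF a_le mult_right_mono[OF t_pow b_nonneg]] by simp
    then have "summable a"
      by (rule summable_comparison_test'[OF \<open>summable b\<close>])
    have "map_exp t F Y = (\<Sum>n. a (n + 2)) + (\<Sum>i<2. a i)"
      unfolding map_exp_def a_def[symmetric] by (rule suminf_split_initial_segment[OF \<open>summable a\<close>])
    also have "(\<Sum>i<2. a i) = Y + t *\<^sub>R F Y" by (simp add: a_def numeral_2_eq_2)
    finally have "map_exp t F Y - Y - t *\<^sub>R F Y = (\<Sum>n. a (n + 2))" by simp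
    also have "norm \<dots> \<le> (\<Sum>n. t\<^sup>2 * b (n + 2))"
    proof (rule norm_suminf_le)
      fix n
      have "t ^ (n + 2) \<le> t\<^sup>2"
        using mult_left_le[OF t_pow[of n], of "t\<^sup>2"] t by (metis power_add mult.commute zero_le_power2)
      then show "norm (a (n + 2)) \<le> t\<^sup>2 * b (n + 2)"
        using a_le[of "n + 2"] b_nonneg[of "n + 2"] by (meson mult_right_mono order_trans)
    qed (rule summable_mult[OF b_tail])
    also have "\<dots> = t\<^sup>2 * (\<Sum>n. b (n + 2))" by (rule suminf_mult[OF b_tail])
    finally show ?thesis .
  qed
  then show ?thesis by (rule that)
qed

lemma map_exp_difference_quotient_tendsto:
  assumes "bounded_linear F"
  shows "((\<lambda>t. (1 / t) *\<^sub>R (map_exp t F Y - Y)) \<longlongrightarrow> F Y) (at_right 0)"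
proof -
  obtain K where K: "\<And>t. 0 \<le> t \<Longrightarrow> t \<le> 1 \<Longrightarrow> norm (map_exp t F Y - Y - t *\<^sub>R F Y) \<le> t\<^sup>2 * K"
    using map_exp_second_order_bound[OF assms] by blast
  have "eventually (\<lambda>t. norm ((1 / t) *\<^sub>R (map_exp t F Y - Y) - F Y) \<le> t * K) (at_right (0::real))"
    unfolding eventually_at_right_field
  proof (intro exI[of _ 1] conjI allI impI)
    fix t :: real assume t: "0 < t" "t < 1"
    have "(1 / t) *\<^sub>R (map_exp t F Y - Y) - F Y = (1 / t) *\<^sub>R (map_exp t F Y - Y - t *\<^sub>R F Y)"
      using t by (simp add: scaleR_diff_right)
    then have "norm ((1 / t) *\<^sub>R (map_exp t F Y - Y) - F Y) = (1 / t) * norm (map_exp t F Y - Y - t *\<^sub>R F Y)"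
      using t by simp
    also have "\<dots> \<le> (1 / t) * (t\<^sup>2 * K)" using K[of t] t by (intro mult_left_mono) auto
    also have "\<dots> = t * K" using t by (simp add: power2_eq_square)
    finally show "norm ((1 / t) *\<^sub>R (map_exp t F Y - Y) - F Y) \<le> t * K" .
  qed simp
  moreover have "((\<lambda>t. t * K) \<longlongrightarrow> 0) (at_right (0::real))"
    by (intro tendsto_eq_intros) auto
  ultimately have "((\<lambda>t. (1 / t) *\<^sub>R (map_exp t F Y - Y) - F Y) \<longlongrightarrow> 0) (at_right 0)"
    by (rule Lim_null_comparison)
  then show ?thesis by (rule LIM_zero_cancel)
qed

lemma map_exp_tendsto_0:
  assumes "bounded_linear F"
  shows "((\<lambda>t. map_exp t F Y) \<longlongrightarrow> Y) (at_right 0)"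
proof -
  have "((\<lambda>t. Y + t *\<^sub>R ((1 / t) *\<^sub>R (map_exp t F Y - Y))) \<longlongrightarrow> Y + 0 *\<^sub>R F Y) (at_right 0)"
    by (intro tendsto_intros map_exp_difference_quotient_tendsto[OF assms])
  moreover have "eventually (\<lambda>t. Y + t *\<^sub>R ((1 / t) *\<^sub>R (map_exp t F Y - Y)) = map_exp t F Y) (at_right (0::real))"
    unfolding eventually_at_right_field by (intro exI[of _ 1]) auto
  ultimately show ?thesis by (auto intro: Lim_transform_eventually)
qed

section \<open>Schwarz semigroups have dissipative generators\<close>

definition qform :: "complex^'n \<Rightarrow> complex^'n^'n \<Rightarrow> complex" where
  "qform \<psi> A = (\<Sum>i\<in>UNIV. cnj (\<psi>$i) * (A *v \<psi>)$i)"

lemma psd_iff_qform: "psd A \<longleftrightarrow> (\<forall>\<psi>. Im (qform \<psi> A) = 0 \<and> 0 \<le> Re (qform \<psi> A))"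
  by (simp add: psd_def qform_def)

lemma qform_2:
  "qform \<psi> (B::cmat2) = cnj (\<psi>$1) * (B$1$1 * \<psi>$1 + B$1$2 * \<psi>$2) + cnj (\<psi>$2) * (B$2$1 * \<psi>$1 + B$2$2 * \<psi>$2)"
  by (simp add: qform_def matrix_vector_mult_def sum_2)

lemma qform_diff: "qform \<psi> (A - B) = qform \<psi> A - qform \<psi> (B::cmat2)"
  by (simp add: qform_2 algebra_simps)

definition dissipator :: "(cmat2 \<Rightarrow> cmat2) \<Rightarrow> cmat2 \<Rightarrow> cmat2" where
  "dissipator F X = F (cadj X ** X) - cadj (F X) ** X - cadj X ** F X"

lemma qform_schwarz_difference_quotient:
  fixes A E X :: cmat2
  assumes "t \<noteq> 0"
  shows "qform \<psi> (A - cadj E ** E) / of_real t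
    = qform \<psi> ((1 / t) *\<^sub>R (A - cadj X ** X)) - qform \<psi> (cadj ((1 / t) *\<^sub>R (E - X)) ** E)
      - qform \<psi> (cadj X ** ((1 / t) *\<^sub>R (E - X)))"
  using assms
  by (simp add: qform_2 cadj_def matrix_matrix_mult_def sum_2 scaleR_eq_cscale cscale_def field_simps)

lemma tendsto_qform_dissipator_terms:
  assumes "(A \<longlongrightarrow> A0) F" "(B \<longlongrightarrow> B0) F" "(C \<longlongrightarrow> C0) F"
  shows "((\<lambda>t. qform \<psi> (A t) - qform \<psi> (cadj (B t) ** C t) - qform \<psi> (cadj X ** B t))
    \<longlongrightarrow> qform \<psi> A0 - qform \<psi> (cadj B0 ** C0) - qform \<psi> (cadj (X::cmat2) ** B0)) F"
  unfolding qform_2 cadj_def matrix_matrix_mult_def sum_2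
  by (simp; intro tendsto_intros assms)

lemma schwarz_semigroup_dissipator_psd:
  assumes F: "bounded_linear F"
    and schwarz: "\<And>t. 0 \<le> t \<Longrightarrow> psd (map_exp t F (cadj X ** X) - cadj (map_exp t F X) ** map_exp t F X)"
  shows "psd (dissipator F X)"
  unfolding psd_iff_qform
proof
  fix \<psi>
  define \<phi> where "\<phi> t = qform \<psi> (map_exp t F (cadj X ** X) - cadj (map_exp t F X) ** map_exp t F X)" for t
  have "((\<lambda>t. qform \<psi> ((1 / t) *\<^sub>R (map_exp t F (cadj X ** X) - cadj X ** X))
      - qform \<psi> (cadj ((1 / t) *\<^sub>R (map_exp t F X - X)) ** map_exp t F X)
      - qform \<psi> (cadj X ** ((1 / t) *\<^sub>R (map_exp t F X - X))))
      \<longlongrightarrow> qform \<psi> (dissipator F X)) (at_right 0)"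
    unfolding dissipator_def qform_diff
    by (intro tendsto_qform_dissipator_terms map_exp_difference_quotient_tendsto[OF F] map_exp_tendsto_0[OF F])
  moreover have "eventually (\<lambda>t. qform \<psi> ((1 / t) *\<^sub>R (map_exp t F (cadj X ** X) - cadj X ** X))
      - qform \<psi> (cadj ((1 / t) *\<^sub>R (map_exp t F X - X)) ** map_exp t F X)
      - qform \<psi> (cadj X ** ((1 / t) *\<^sub>R (map_exp t F X - X))) = \<phi> t / of_real t) (at_right (0::real))"
    unfolding eventually_at_right_field \<phi>_def
    by (intro exI[of _ 1]) (auto intro!: qform_schwarz_difference_quotient[symmetric])
  ultimately have lim: "((\<lambda>t. \<phi> t / of_real t) \<longlongrightarrow> qform \<psi> (dissipator F X)) (at_right 0)"
    by (rule Lim_transform_eventually)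
  have "Im (\<phi> t) = 0 \<and> 0 \<le> Re (\<phi> t)" if "0 \<le> t" for t
    using schwarz[OF that] unfolding psd_iff_qform \<phi>_def by blast
  then have quotient: "eventually (\<lambda>t. Im (\<phi> t / of_real t) = 0 \<and> 0 \<le> Re (\<phi> t / of_real t)) (at_right (0::real))"
    unfolding eventually_at_right_field by (intro exI[of _ 1]) (auto simp: Re_divide_of_real Im_divide_of_real)
  have "((\<lambda>t. Im (\<phi> t / of_real t)) \<longlongrightarrow> 0) (at_right 0)"
    by (rule Lim_transform_eventually[OF tendsto_const]) (use quotient in \<open>auto elim: eventually_mono\<close>)
  then have "Im (qform \<psi> (dissipator F X)) = 0"
    using tendsto_unique[OF _ tendsto_Im[OF lim]] by auto
  moreover have "0 \<le> Re (qform \<psi> (dissipator F X))"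
    by (rule tendsto_lowerbound[OF tendsto_Re[OF lim]]) (use quotient in \<open>auto elim: eventually_mono\<close>)
  ultimately show "Im (qform \<psi> (dissipator F X)) = 0 \<and> 0 \<le> Re (qform \<psi> (dissipator F X))" ..
qed

section \<open>Bloch coordinates of Hermitian 2x2 matrices\<close>

definition bloch :: "real \<Rightarrow> real^3 \<Rightarrow> cmat2" where
  "bloch a b = cscale (of_real a) (mat 1) + (\<Sum>k\<in>UNIV. cscale (of_real (b$k)) (pauli k))"

lemma bloch_nth:
  "bloch a b $1$1 = of_real (a + b$3)" "bloch a b $1$2 = Complex (b$1) (- b$2)"
  "bloch a b $2$1 = Complex (b$1) (b$2)" "bloch a b $2$2 = of_real (a - b$3)"
  by (simp_all add: bloch_def cscale_def pauli_def mat_def sum_3 complex_eq_iff)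

lemma hs_inner_bloch_pauli: "hs_inner (bloch a b) (pauli k) = 2 * of_real (b$k)"
  using exhaust_3[of k] by (auto simp: hs_inner_def sum_2 bloch_nth pauli_def complex_eq_iff)

lemma cadj_pauli: "cadj (pauli k) = pauli k"
  using exhaust_3[of k] by (auto simp: vec_eq_iff forall_2 cadj_def pauli_def)

lemma psd_bloch_bound:
  assumes "psd (bloch a b)"
  shows "0 \<le> a * norm n + b \<bullet> n"
proof (cases "n = 0")
  case False
  define \<mu> where "\<mu> = norm n"
  have \<mu>: "0 < \<mu>" "\<mu>\<^sup>2 = n \<bullet> n" using False by (simp_all add: \<mu>_def power2_norm_eq_inner)
  define Z where "Z = a * \<mu> + b \<bullet> n"
  have nonneg: "0 \<le> Re (qform \<psi> (bloch a b))" for \<psi>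
    using assms by (simp add: psd_iff_qform)
  \<comment> \<open>Both test vectors lie in the \<open>\<mu>\<close>-eigenspace of \<open>n\<cdot>\<sigma>\<close>; one of them may vanish, but not both.\<close>
  have "Re (qform (vector [of_real (\<mu> + n$3), Complex (n$1) (n$2)]) (bloch a b)) - 2 * (\<mu> + n$3) * Z
      = (a - b$3) * (n \<bullet> n - \<mu>\<^sup>2)"
    by (simp add: Z_def qform_2 bloch_nth inner_vec_def sum_3 power2_eq_square algebra_simps)
  with \<mu> nonneg[of "vector [of_real (\<mu> + n$3), Complex (n$1) (n$2)]"] have "0 \<le> (\<mu> + n$3) * Z"
    by (simp add: ring_distribs)
  moreover have "Re (qform (vector [Complex (n$1) (- n$2), of_real (\<mu> - n$3)]) (bloch a b)) - 2 * (\<mu> - n$3) * Z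
      = (a + b$3) * (n \<bullet> n - \<mu>\<^sup>2)"
    by (simp add: Z_def qform_2 bloch_nth inner_vec_def sum_3 power2_eq_square algebra_simps)
  with \<mu> nonneg[of "vector [Complex (n$1) (- n$2), of_real (\<mu> - n$3)]"] have "0 \<le> (\<mu> - n$3) * Z"
    by (simp add: ring_distribs)
  ultimately have "0 \<le> (2 * \<mu>) * Z" by (simp add: algebra_simps)
  with \<mu> show ?thesis by (simp add: Z_def \<mu>_def zero_le_mult_iff)
qed simp

lemma hermitian_imp_bloch:
  assumes "\<And>\<psi>. Im (qform \<psi> B) = 0"
  shows "\<exists>a b. B = bloch a b"
proof -
  have re11: "Im (B$1$1) = 0" using assms[of "vector [1, 0]"] by (simp add: qform_2)
  have re22: "Im (B$2$2) = 0" using assms[of "vector [0, 1]"] by (simp add: qform_2)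
  have "Im (B$1$2) + Im (B$2$1) = 0"
    using assms[of "vector [1, 1]"] re11 re22 by (simp add: qform_2)
  moreover have "Re (B$1$2) = Re (B$2$1)"
    using assms[of "vector [1, \<i>]"] re11 re22 by (simp add: qform_2)
  ultimately have "B = bloch (Re (B$1$1 + B$2$2) / 2) (vector [Re (B$1$2), - Im (B$1$2), Re (B$1$1 - B$2$2) / 2])"
    using re11 re22 by (simp add: vec_eq_iff forall_2 bloch_nth complex_eq_iff field_simps)
  then show ?thesis by blast
qed

lemma qform_cadj: "qform \<psi> (cadj B) = cnj (qform \<psi> (B::cmat2))"
  by (simp add: qform_2 cadj_def algebra_simps)

lemma cadj_mult: "cadj (A ** B) = cadj B ** cadj (A::cmat2)"
  by (simp add: vec_eq_iff forall_2 cadj_def matrix_matrix_mult_def sum_2 mult.commute)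

lemma cadj_add: "cadj (A + B) = cadj A + cadj B"
  by (simp add: vec_eq_iff cadj_def)

lemma dissipative_pauli_image_hermitian:
  assumes F: "clinear_map F" "F (mat 1) = 0" and diss: "\<And>X. psd (dissipator F X)"
  shows "Im (qform \<psi> (F (pauli k))) = 0"
proof -
  let ?X = "mat 1 + pauli k" and ?A = "F (pauli k)"
  have "cadj ?X ** ?X = cscale 2 ?X"
    using exhaust_3[of k]
    by (auto simp: vec_eq_iff forall_2 cadj_def pauli_def matrix_matrix_mult_def sum_2 cscale_def mat_def)
  moreover have "cadj ?X = ?X"
    by (simp add: cadj_add cadj_pauli) (simp add: vec_eq_iff cadj_def mat_def)
  ultimately have "dissipator F ?X = cscale 2 ?A - cadj (?X ** ?A) - ?X ** ?A"
    using F by (simp add: dissipator_def clinear_map_def cadj_mult)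
  then have "Im (qform \<psi> (dissipator F ?X)) = 2 * Im (qform \<psi> ?A)"
    by (simp add: qform_diff qform_cadj) (simp add: qform_2 cscale_def algebra_simps)
  then show ?thesis
    using diss[of ?X] by (simp add: psd_iff_qform)
qed

lemma dissipative_pauli_images_bloch:
  assumes "clinear_map F" "F (mat 1) = 0" "\<And>X. psd (dissipator F X)"
  obtains s m where "\<And>k. F (pauli k) = bloch (s$k) (m$k)"
proof -
  have "\<forall>k. \<exists>a b. F (pauli k) = bloch a b"
    using hermitian_imp_bloch dissipative_pauli_image_hermitian[OF assms] by blast
  then obtain a b where "\<And>k. F (pauli k) = bloch (a k) (b k)" by metis
  then show ?thesis
    by (intro that[of "\<chi> k. a k" "\<chi> k. b k"]) simp
qed

lemma restr_T_matrix_eq: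
  assumes L: "clinear_map L" and dual_pauli: "\<And>k. dual_map L (pauli k) = bloch (s$k) (m$k)"
  shows "restr_T_matrix L = (\<chi> j k. of_real (m$j$k))"
proof -
  have "mtrace (pauli j ** L (pauli k)) = hs_inner (dual_map L (pauli j)) (pauli k)" for j k
    using mtrace_cadj_mult[of "pauli j"] hs_inner_dual_map[OF L] by (simp add: cadj_pauli)
  then show ?thesis
    by (simp add: restr_T_matrix_def vec_eq_iff dual_pauli hs_inner_bloch_pauli)
qed

section \<open>The dissipator on traceless matrices\<close>

definition pauli_vec :: "real^3 \<Rightarrow> real^3 \<Rightarrow> cmat2" where
  "pauli_vec u v = (\<Sum>k\<in>UNIV. cscale (Complex (u$k) (v$k)) (pauli k))"

lemma cadj_pauli_vec_mult_self:
  "cadj (pauli_vec u v) ** pauli_vec u v = bloch (u \<bullet> u + v \<bullet> v) ((-2) *\<^sub>R (u \<times> v))"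
  by (simp add: vec_eq_iff forall_2 bloch_nth cadj_def pauli_vec_def pauli_def cscale_def
      matrix_matrix_mult_def sum_2 sum_3 cross_components inner_vec_def complex_eq_iff algebra_simps)

lemma pauli_vec_anticommutator:
  "cadj (pauli_vec a b) ** pauli_vec u v + cadj (pauli_vec u v) ** pauli_vec a b
     = bloch (2 * (a \<bullet> u + b \<bullet> v)) ((-2) *\<^sub>R (a \<times> v + u \<times> b))"
  unfolding vec_eq_iff forall_2
  by (simp add: bloch_nth cadj_def pauli_vec_def pauli_def cscale_def
      matrix_matrix_mult_def sum_2 sum_3 cross_components inner_vec_def complex_eq_iff; algebra)

lemma scalar_pauli_vec_anticommutator:
  "cadj (cscale c (mat 1)) ** pauli_vec u v + cadj (pauli_vec u v) ** cscale c (mat 1)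
     = bloch 0 (2 *\<^sub>R (Re c *\<^sub>R u + Im c *\<^sub>R v))"
  by (simp add: vec_eq_iff forall_2 bloch_nth cadj_def pauli_vec_def pauli_def cscale_def mat_def
      matrix_matrix_mult_def sum_2 sum_3 complex_eq_iff algebra_simps)

lemma bloch_add: "bloch a b + bloch a' b' = bloch (a + a') (b + b')"
  by (simp add: vec_eq_iff forall_2 bloch_nth complex_eq_iff)

lemma bloch_diff: "bloch a b - bloch a' b' = bloch (a - a') (b - b')"
  by (simp add: vec_eq_iff forall_2 bloch_nth complex_eq_iff)

lemma matrix_add_rdistrib: "(A + B) ** C = A ** C + B ** (C::'a::semiring_1^'p^'n)"
  by (simp add: matrix_matrix_mult_def vec_eq_iff sum.distrib distrib_right)

lemma transpose_cross_trace:
  fixes m :: "real^3^3"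
  shows "(transpose m *v u) \<times> v + u \<times> (transpose m *v v) = trace m *\<^sub>R (u \<times> v) - m *v (u \<times> v)"
  by (simp add: vec_eq_iff forall_3 cross_components matrix_vector_mult_def transpose_def trace_def sum_3 algebra_simps
      del: transpose_matrix_vector)

lemma clinear_map_bloch:
  assumes "clinear_map F"
  shows "F (bloch a b) = cscale (of_real a) (F (mat 1)) + (\<Sum>k\<in>UNIV. cscale (of_real (b$k)) (F (pauli k)))"
  using assms clinear_map_sum_cscale[OF assms] by (simp add: clinear_map_def bloch_def)

lemma clinear_map_bloch_image:
  assumes F: "clinear_map F" "F (mat 1) = 0" and F_pauli: "\<And>k. F (pauli k) = bloch (s$k) (m$k)"
  shows "F (bloch a b) = bloch (s \<bullet> b) (transpose m *v b)"
  unfolding clinear_map_bloch[OF F(1)] F_pauli F(2)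
  by (simp add: vec_eq_iff forall_2 bloch_nth cscale_def inner_vec_def matrix_vector_mult_def transpose_def
      sum_3 complex_eq_iff algebra_simps del: transpose_matrix_vector)

lemma clinear_map_pauli_vec_image:
  assumes F: "clinear_map F" and F_pauli: "\<And>k. F (pauli k) = bloch (s$k) (m$k)"
  shows "F (pauli_vec u v) = cscale (Complex (s \<bullet> u) (s \<bullet> v)) (mat 1) + pauli_vec (transpose m *v u) (transpose m *v v)"
  unfolding pauli_vec_def clinear_map_sum_cscale[OF F] F_pauli
  by (simp add: vec_eq_iff forall_2 bloch_nth cscale_def mat_def pauli_def inner_vec_def matrix_vector_mult_def
      transpose_def sum_2 sum_3 complex_eq_iff algebra_simps del: transpose_matrix_vector)

lemma dissipator_pauli_vec:
  assumes F: "clinear_map F" "F (mat 1) = 0" and F_pauli: "\<And>k. F (pauli k) = bloch (s$k) (m$k)"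
  shows "dissipator F (pauli_vec u v) =
    bloch (- 2 * (u \<bullet> (m *v u) + v \<bullet> (m *v v)) - 2 * (s \<bullet> (u \<times> v)))
      (2 *\<^sub>R (trace m *\<^sub>R (u \<times> v) - (m + transpose m) *v (u \<times> v)) - 2 *\<^sub>R ((s \<bullet> u) *\<^sub>R u + (s \<bullet> v) *\<^sub>R v))"
proof -
  let ?X = "pauli_vec u v" and ?c = "Complex (s \<bullet> u) (s \<bullet> v)"
  let ?Y = "pauli_vec (transpose m *v u) (transpose m *v v)"
  have "dissipator F ?X = F (cadj ?X ** ?X)
      - ((cadj (cscale ?c (mat 1)) ** ?X + cadj ?X ** cscale ?c (mat 1)) + (cadj ?Y ** ?X + cadj ?X ** ?Y))"
    unfolding dissipator_def clinear_map_pauli_vec_image[OF F(1) F_pauli] cadj_add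
    by (simp add: matrix_add_ldistrib matrix_add_rdistrib algebra_simps del: transpose_matrix_vector)
  also have "\<dots> = bloch (- 2 * (s \<bullet> (u \<times> v)) - (2 * ((transpose m *v u) \<bullet> u + (transpose m *v v) \<bullet> v)))
      ((-2) *\<^sub>R (transpose m *v (u \<times> v)) - (2 *\<^sub>R ((s \<bullet> u) *\<^sub>R u + (s \<bullet> v) *\<^sub>R v)
         - 2 *\<^sub>R ((transpose m *v u) \<times> v + u \<times> (transpose m *v v))))"
    unfolding cadj_pauli_vec_mult_self clinear_map_bloch_image[OF F F_pauli] scalar_pauli_vec_anticommutator
      pauli_vec_anticommutator bloch_add bloch_diff
    by (simp add: inner_commute matrix_vector_mult_scaleR linear_neg[OF matrix_vector_mul_linear]
        del: transpose_matrix_vector)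
  also have "\<dots> = bloch (- 2 * (u \<bullet> (m *v u) + v \<bullet> (m *v v)) - 2 * (s \<bullet> (u \<times> v)))
      (2 *\<^sub>R (trace m *\<^sub>R (u \<times> v) - (m + transpose m) *v (u \<times> v)) - 2 *\<^sub>R ((s \<bullet> u) *\<^sub>R u + (s \<bullet> v) *\<^sub>R v))"
  proof (rule arg_cong2[where f = bloch])
    have "(transpose m *v w) \<bullet> w = w \<bullet> (m *v w)" for w
      by (simp add: dot_lmul_matrix)
    then show "- 2 * (s \<bullet> (u \<times> v)) - (2 * ((transpose m *v u) \<bullet> u + (transpose m *v v) \<bullet> v))
        = - 2 * (u \<bullet> (m *v u) + v \<bullet> (m *v v)) - 2 * (s \<bullet> (u \<times> v))"
      by (simp del: transpose_matrix_vector)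
  qed (unfold transpose_cross_trace, simp add: matrix_vector_mult_add_rdistrib algebra_simps del: transpose_matrix_vector)
  finally show ?thesis .
qed

lemma generator_cross_inequality:
  assumes F: "clinear_map F" "F (mat 1) = 0" and F_pauli: "\<And>k. F (pauli k) = bloch (s$k) (m$k)"
    and diss: "\<And>X. psd (dissipator F X)"
  shows "norm n * (u \<bullet> (m *v u) + v \<bullet> (m *v v)) \<le> n \<bullet> (trace m *\<^sub>R (u \<times> v) - (m + transpose m) *v (u \<times> v))"
proof -
  have bound: "0 \<le> (- 2 * (u \<bullet> (m *v u) + v \<bullet> (m *v v)) - 2 * (s \<bullet> (u \<times> v))) * norm n
      + (2 *\<^sub>R (trace m *\<^sub>R (u \<times> v) - (m + transpose m) *v (u \<times> v)) - 2 *\<^sub>R ((s \<bullet> u) *\<^sub>R u + (s \<bullet> v) *\<^sub>R v)) \<bullet> n"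
    for u v n
    using psd_bloch_bound[OF diss[of "pauli_vec u v", unfolded dissipator_pauli_vec[OF F F_pauli]]] .
  \<comment> \<open>The terms involving \<open>s\<close> change sign under \<open>(v, n) \<mapsto> (-v, -n)\<close> and cancel in the sum.\<close>
  from bound[of u v n] bound[of u "- v" "- n"] show ?thesis
    by (simp add: inner_diff_left inner_add_left linear_neg[OF matrix_vector_mul_linear] inner_commute algebra_simps)
qed

lemma inner_transpose_mult_self: "w \<bullet> (transpose m *v w) = w \<bullet> (m *v (w::real^'n))"
  by (metis dot_lmul_matrix inner_commute transpose_matrix_vector)

text \<open>The vectors \<open>w\<close>, \<open>p = w \<times> e\<close>, \<open>w \<times> p\<close> are orthogonal, with squared lengths \<open>|w|\<^sup>2\<close>, \<open>|p|\<^sup>2\<close>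
  and \<open>|w|\<^sup>2 |p|\<^sup>2\<close>; the identity expresses \<open>tr m\<close> in this frame.\<close>

lemma trace_cross_frame:
  fixes m :: "real^3^3"
  shows "(w \<bullet> w) * ((w \<times> e) \<bullet> (m *v (w \<times> e))) + (w \<times> (w \<times> e)) \<bullet> (m *v (w \<times> (w \<times> e)))
       = ((w \<times> e) \<bullet> (w \<times> e)) * ((w \<bullet> w) * trace m - w \<bullet> (m *v w))"
  unfolding cross_components inner_vec_def matrix_vector_mult_def trace_def sum_3 vec_lambda_beta inner_real_def
  by algebra

lemma quadratic_form_trace_bound:
  fixes m :: "real^3^3"
  assumes H: "\<And>u v n. norm n * (u \<bullet> (m *v u) + v \<bullet> (m *v v)) \<le> n \<bullet> (trace m *\<^sub>R (u \<times> v) - (m + transpose m) *v (u \<times> v))"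
  shows "2 * (w \<bullet> w) * trace m \<le> 3 * (w \<bullet> (m *v w))"
proof (cases "w = 0")
  case False
  then obtain e where "w \<times> e \<noteq> 0" using cross_basis_nonzero by blast
  define p where "p = w \<times> e"
  define \<rho> where "\<rho> = p \<bullet> p"
  have "0 < norm w * \<rho>" using False \<open>w \<times> e \<noteq> 0\<close> by (simp add: \<rho>_def p_def)
  have "p \<bullet> w = 0" by (simp add: p_def dot_cross_self)
  then have uv: "(norm w *\<^sub>R p) \<times> (w \<times> p) = (norm w * \<rho>) *\<^sub>R w"
    by (simp add: cross_mult_left Lagrange \<rho>_def)
  have frame: "norm w *\<^sub>R p \<bullet> (m *v (norm w *\<^sub>R p)) + (w \<times> p) \<bullet> (m *v (w \<times> p))
      = \<rho> * ((w \<bullet> w) * trace m - w \<bullet> (m *v w))"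
    using trace_cross_frame[of w e m]
    by (simp add: p_def \<rho>_def matrix_vector_mult_scaleR power2_norm_eq_inner[symmetric] power2_eq_square)
  have rhs: "(- w) \<bullet> (trace m *\<^sub>R ((norm w * \<rho>) *\<^sub>R w) - (m + transpose m) *v ((norm w * \<rho>) *\<^sub>R w))
      = - (norm w * \<rho>) * ((w \<bullet> w) * trace m - 2 * (w \<bullet> (m *v w)))"
    by (simp add: matrix_vector_mult_scaleR matrix_vector_mult_add_rdistrib inner_transpose_mult_self algebra_simps
        del: transpose_matrix_vector)
  have "norm w * (\<rho> * ((w \<bullet> w) * trace m - w \<bullet> (m *v w)))
      \<le> - (norm w * \<rho>) * ((w \<bullet> w) * trace m - 2 * (w \<bullet> (m *v w)))"
    using H[where u = "norm w *\<^sub>R p" and v = "w \<times> p" and n = "- w"] by (simp only: norm_minus_cancel frame uv rhs)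
  then have "(norm w * \<rho>) * (2 * (w \<bullet> w) * trace m) \<le> (norm w * \<rho>) * (3 * (w \<bullet> (m *v w)))"
    by (simp add: algebra_simps)
  with \<open>0 < norm w * \<rho>\<close> show ?thesis by (simp only: mult_le_cancel_left_pos)
qed simp

lemma det_eq_0_imp_eigenvector:
  fixes M :: "'a::field^'n^'n"
  assumes "det (mat z - M) = 0"
  obtains x where "x \<noteq> 0" "M *v x = z *s x"
proof -
  have "\<not> invertible (mat z - M)" using assms invertible_det_nz by blast
  then obtain x where "(mat z - M) *v x = 0" "x \<noteq> 0"
    using invertible_left_inverse matrix_left_invertible_ker by blast
  moreover have "mat z *v x = z *s x"
    by (simp add: vec_eq_iff matrix_vector_mult_def mat_def if_distrib if_distribR cong: if_cong)
  ultimately show ?thesis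
    using that by (simp add: matrix_vector_mult_diff_rdistrib)
qed

lemma Re_eigenvalue_ge:
  fixes m :: "real^'n^'n" and x :: "complex^'n"
  assumes bound: "\<And>w. c * (w \<bullet> w) \<le> w \<bullet> (m *v w)"
    and eigen: "(\<chi> i j. of_real (m$i$j)) *v x = z *s x" and "x \<noteq> 0"
  shows "c \<le> Re z"
proof -
  define p where "p = (\<chi> i. Re (x$i))"
  define q where "q = (\<chi> i. Im (x$i))"
  have "Re (\<Sum>i\<in>UNIV. cnj (x$i) * ((\<chi> i j. of_real (m$i$j)) *v x)$i) = p \<bullet> (m *v p) + q \<bullet> (m *v q)"
    by (simp add: p_def q_def inner_vec_def matrix_vector_mult_def Re_sum sum_distrib_left
        sum.distrib[symmetric] algebra_simps)
  moreover have "Re (\<Sum>i\<in>UNIV. cnj (x$i) * (z *s x)$i) = Re z * (p \<bullet> p + q \<bullet> q)"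
    by (simp add: p_def q_def inner_vec_def Re_sum sum_distrib_left sum.distrib[symmetric] algebra_simps)
  ultimately have "Re z * (p \<bullet> p + q \<bullet> q) = p \<bullet> (m *v p) + q \<bullet> (m *v q)"
    using eigen by simp
  also have "\<dots> \<ge> c * (p \<bullet> p + q \<bullet> q)"
    using bound[of p] bound[of q] by (simp add: algebra_simps)
  finally have "c * (p \<bullet> p + q \<bullet> q) \<le> Re z * (p \<bullet> p + q \<bullet> q)" .
  moreover have "p \<noteq> 0 \<or> q \<noteq> 0"
    using \<open>x \<noteq> 0\<close> by (auto simp: p_def q_def vec_eq_iff complex_eq_iff)
  then have "0 < p \<bullet> p + q \<bullet> q"
    by (metis add_nonneg_pos add_pos_nonneg inner_gt_zero_iff inner_ge_zero)
  ultimately show ?thesis by simp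
qed

lemma poly_char_poly3: "poly (char_poly3 M) z = det (mat z - M)"
  unfolding char_poly3_def det_3 by (simp add: mat_def) algebra

lemma char_poly3_root:
  fixes ev :: "3 \<Rightarrow> complex"
  assumes "char_poly3 M = (\<Prod>k\<in>UNIV. [:- ev k, 1:])"
  shows "det (mat (ev k) - M) = 0"
proof -
  have "det (mat (ev k) - M) = (\<Prod>j\<in>UNIV. poly [:- ev j, 1:] (ev k))"
    by (simp only: poly_char_poly3[symmetric] assms poly_prod)
  also have "\<dots> = 0" by (rule prod_zero) auto
  finally show ?thesis .
qed

text \<open>The combination \<open>D 1 + D (-1) - 2 D 0\<close> of values of a monic cubic \<open>D\<close> is \<open>-2\<close> times its
  coefficient of \<open>z\<^sup>2\<close>.\<close>

lemma char_poly3_sum_roots: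
  fixes ev :: "3 \<Rightarrow> complex"
  assumes "char_poly3 M = (\<Prod>k\<in>UNIV. [:- ev k, 1:])"
  shows "(\<Sum>k\<in>UNIV. ev k) = trace M"
proof -
  have D: "det (mat z - M) = (z - ev 1) * (z - ev 2) * (z - ev 3)" for z
    unfolding poly_char_poly3[symmetric] assms poly_prod UNIV_3 by (simp add: mult.assoc)
  have "det (mat 1 - M) + det (mat (- 1) - M) - 2 * det (mat 0 - M) = - 2 * trace M"
    unfolding det_3 by (simp add: mat_def trace_def sum_3 algebra_simps)
  then have "2 * trace M = 2 * (\<Sum>k\<in>UNIV. ev k)"
    unfolding D by (simp add: sum_3 algebra_simps)
  then show ?thesis by simp
qed

theorem theorem1:
  fixes L :: "cmat2 \<Rightarrow> cmat2" and ev :: "3 \<Rightarrow> complex"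
  assumes lin: "clinear_map L"
    and tp: "\<forall>X. mtrace (L X) = 0"
    and schwarz: "\<forall>t::real. t \<ge> 0 \<longrightarrow> unital_schwarz (map_exp t (hs_dual L))"
    and eig: "char_poly3 (restr_T_matrix L) = (\<Prod>k\<in>UNIV. [:- ev k, 1:])"
  shows "\<forall>k. - Re (ev k) \<le> 2/3 * (\<Sum>j\<in>UNIV. - Re (ev j))"
proof -
  define F where "F = dual_map L"
  have F: "clinear_map F" "F (mat 1) = 0"
    using clinear_map_dual_map dual_map_one_eq_0 tp by (auto simp: F_def)
  have diss: "psd (dissipator F X)" for X
  proof (rule schwarz_semigroup_dissipator_psd[OF clinear_map_imp_bounded_linear[OF F(1)]])
    show "psd (map_exp t F (cadj X ** X) - cadj (map_exp t F X) ** map_exp t F X)" if "0 \<le> t" for t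
      using schwarz that by (simp add: unital_schwarz_def hs_dual_eq_dual_map[OF lin] F_def)
  qed
  obtain s m where F_pauli: "\<And>k. F (pauli k) = bloch (s$k) (m$k)"
    using dissipative_pauli_images_bloch[OF F diss] by blast
  have M: "restr_T_matrix L = (\<chi> j k. of_real (m$j$k))"
    using restr_T_matrix_eq[OF lin] F_pauli by (simp add: F_def)
  have "2/3 * trace m * (w \<bullet> w) \<le> w \<bullet> (m *v w)" for w
    using quadratic_form_trace_bound[OF generator_cross_inequality[OF F F_pauli diss], where w = w]
    by (simp add: algebra_simps)
  then have Re_ev: "2/3 * trace m \<le> Re (ev k)" for k
    using det_eq_0_imp_eigenvector[OF char_poly3_root[OF eig]] Re_eigenvalue_ge unfolding M by metis
  have "(\<Sum>j\<in>UNIV. Re (ev j)) = trace m"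
    using arg_cong[OF char_poly3_sum_roots[OF eig], of Re] by (simp add: M Re_sum trace_def)
  with Re_ev show ?thesis by (simp add: sum_negf)
qed

end
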